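(* If an $n$-qubit code satisfies the Knill–Laflamme conditions for all spherical Pauli errors $\mathrm{Sph}(E)$ with $\mathrm{wt}(E)<d$, then it also satisfies the Knill–Laflamme conditions for all symmetrized Pauli errors $\mathrm{Sym}(E)$ with $\mathrm{wt}(E)<d$.
   Context: For an $n$-qubit operator $A$, $\mathrm{Sym}(A)=\tfrac{1}{n!}\sum_{\sigma\in S_n}P_\sigma^\dagger AP_\sigma$ where $P_\sigma$ permutes the tensor factors. A Pauli $E$ of weight $w$ (number of non-identity factors) is uniquely $E=E_1\cdots E_w$ with each $E_i$ of weight one, and $\mathrm{Sph}(E)=\mathrm{Sym}(E_1)\cdots\mathrm{Sym}(E_w)$. A code satisfies the Knill–Laflamme conditions for an operator $A$ if $\langle\phi|A|\psi\rangle=c_A\langle\phi|\psi\rangle$ for all codewords, with $c_A$ independent of the codewords. *)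

theory Defs
  imports "HOL-Combinatorics.Permutations" Complex_Main
begin

text \<open>Single-qubit Pauli matrices. Computational basis: False = |0>, True = |1>.\<close>
datatype pauli = PI | PX | PY | PZ

fun pmat :: "pauli \<Rightarrow> bool \<Rightarrow> bool \<Rightarrow> complex" where
  "pmat PI a b = (if a = b then 1 else 0)"
| "pmat PX a b = (if a = b then 0 else 1)"
| "pmat PY a b = (if a = b then 0 else if b then - \<i> else \<i>)"
| "pmat PZ a b = (if a = b then (if a then -1 else 1) else 0)"

text \<open>n-qubit computational basis states: bit strings x with x i = False for i \<ge> n.
  Operators are given by their matrix entries  <x|A|y>, vectors by their coordinates.\<close>
type_synonym qop = "(nat \<Rightarrow> bool) \<Rightarrow> (nat \<Rightarrow> bool) \<Rightarrow> complex"
type_synonym qvec = "(nat \<Rightarrow> bool) \<Rightarrow> complex"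

definition basis :: "nat \<Rightarrow> (nat \<Rightarrow> bool) set" where
  "basis n = {x. \<forall>i\<ge>n. \<not> x i}"

definition op_mult :: "nat \<Rightarrow> qop \<Rightarrow> qop \<Rightarrow> qop" where
  "op_mult n A B = (\<lambda>x y. \<Sum>z\<in>basis n. A x z * B z y)"

definition op_id :: qop where
  "op_id = (\<lambda>x y. if x = y then 1 else 0)"

definition pauli_string :: "nat \<Rightarrow> (nat \<Rightarrow> pauli) \<Rightarrow> bool" where
  "pauli_string n p \<longleftrightarrow> (\<forall>i\<ge>n. p i = PI)"

definition pauli_op :: "nat \<Rightarrow> (nat \<Rightarrow> pauli) \<Rightarrow> qop" where
  "pauli_op n p = (\<lambda>x y. \<Prod>i<n. pmat (p i) (x i) (y i))"

definition supp :: "nat \<Rightarrow> (nat \<Rightarrow> pauli) \<Rightarrow> nat set" where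
  "supp n p = {i. i < n \<and> p i \<noteq> PI}"

definition wt :: "nat \<Rightarrow> (nat \<Rightarrow> pauli) \<Rightarrow> nat" where
  "wt n p = card (supp n p)"

text \<open>Conjugation by the qubit permutation P_sigma:  <x| P_sigma^dagger A P_sigma |y> = <x o sigma|A|y o sigma>.\<close>
definition perm_conj :: "(nat \<Rightarrow> nat) \<Rightarrow> qop \<Rightarrow> qop" where
  "perm_conj \<sigma> A = (\<lambda>x y. A (x \<circ> \<sigma>) (y \<circ> \<sigma>))"

definition Sym :: "nat \<Rightarrow> qop \<Rightarrow> qop" where
  "Sym n A = (\<lambda>x y. (1 / of_nat (fact n)) *
      (\<Sum>\<sigma>\<in>{\<sigma>. \<sigma> permutes {..<n}}. perm_conj \<sigma> A x y))"

definition single :: "(nat \<Rightarrow> pauli) \<Rightarrow> nat \<Rightarrow> (nat \<Rightarrow> pauli)" where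
  "single p i = (\<lambda>j. if j = i then p i else PI)"

text \<open>Sph(E) = Sym(E_1) ... Sym(E_w), the factors E_j ordered by increasing qubit position.\<close>
definition Sph :: "nat \<Rightarrow> (nat \<Rightarrow> pauli) \<Rightarrow> qop" where
  "Sph n p = foldr (\<lambda>i acc. op_mult n (Sym n (pauli_op n (single p i))) acc)
                   (sorted_list_of_set (supp n p)) op_id"

definition inner :: "nat \<Rightarrow> qvec \<Rightarrow> qvec \<Rightarrow> complex" where
  "inner n \<phi> \<psi> = (\<Sum>x\<in>basis n. cnj (\<phi> x) * \<psi> x)"

definition braket :: "nat \<Rightarrow> qvec \<Rightarrow> qop \<Rightarrow> qvec \<Rightarrow> complex" where
  "braket n \<phi> A \<psi> = (\<Sum>x\<in>basis n. \<Sum>y\<in>basis n. cnj (\<phi> x) * A x y * \<psi> y)"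

definition is_code :: "nat \<Rightarrow> qvec set \<Rightarrow> bool" where
  "is_code n C \<longleftrightarrow> (\<lambda>_. 0) \<in> C
     \<and> (\<forall>\<phi>\<in>C. \<forall>\<psi>\<in>C. (\<lambda>x. \<phi> x + \<psi> x) \<in> C)
     \<and> (\<forall>c. \<forall>\<phi>\<in>C. (\<lambda>x. c * \<phi> x) \<in> C)
     \<and> (\<forall>\<phi>\<in>C. \<forall>x. x \<notin> basis n \<longrightarrow> \<phi> x = 0)"

definition KL :: "nat \<Rightarrow> qvec set \<Rightarrow> qop \<Rightarrow> bool" where
  "KL n C A \<longleftrightarrow> (\<exists>c. \<forall>\<phi>\<in>C. \<forall>\<psi>\<in>C. braket n \<phi> A \<psi> = c * inner n \<phi> \<psi>)"

end

theory Submission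
  imports Defs
begin

text \<open>
  By permutation invariance, Sym(A) Sym(B) = Sym(A Sym(B)); with A = E_1 and B = E_2 ... E_w this
  is the average over qubit permutations \<sigma> of Sym(E_1 \<sigma>(B)). When \<sigma>(B) is trivial on the
  qubit of E_1, the product E_1 \<sigma>(B) is a qubit permutation of E and contributes Sym(E); otherwise it
  has weight at most wt(B) < wt(E). Inductively, Sph(E) is therefore a nonzero multiple of Sym(E) plus
  a linear combination of Sym(F) with wt(F) < wt(E). As the Knill-Laflamme conditions are preserved
  by linear combinations, induction on the weight transfers them from Sph to Sym.
\<close>

section \<open>Products of Pauli operators\<close>

fun pauli_prod :: "pauli \<Rightarrow> pauli \<Rightarrow> pauli" where
  "pauli_prod PI q = q"
| "pauli_prod p PI = p"
| "pauli_prod PX PX = PI" | "pauli_prod PY PY = PI" | "pauli_prod PZ PZ = PI"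
| "pauli_prod PX PY = PZ" | "pauli_prod PY PX = PZ"
| "pauli_prod PY PZ = PX" | "pauli_prod PZ PY = PX"
| "pauli_prod PZ PX = PY" | "pauli_prod PX PZ = PY"

fun pauli_phase :: "pauli \<Rightarrow> pauli \<Rightarrow> complex" where
  "pauli_phase PX PY = \<i>" | "pauli_phase PY PX = - \<i>"
| "pauli_phase PY PZ = \<i>" | "pauli_phase PZ PY = - \<i>"
| "pauli_phase PZ PX = \<i>" | "pauli_phase PX PZ = - \<i>"
| "pauli_phase _ _ = 1"

lemma pauli_phase_PI [simp]: "pauli_phase PI q = 1" "pauli_phase p PI = 1"
  by (cases q; simp) (cases p; simp)

lemma pauli_prod_PI_right [simp]: "pauli_prod p PI = p"
  by (cases p) auto

lemma pmat_mult:
  "pmat p a False * pmat q False c + pmat p a True * pmat q True c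
     = pauli_phase p q * pmat (pauli_prod p q) a c"
  by (cases p; cases q; cases a; cases c) auto

lemma basis_0: "basis 0 = {\<lambda>_. False}"
  by (auto simp: basis_def)

lemma basis_Suc: "basis (Suc n) = (\<lambda>(z, b). z(n := b)) ` (basis n \<times> UNIV)"
proof
  show "basis (Suc n) \<subseteq> (\<lambda>(z, b). z(n := b)) ` (basis n \<times> UNIV)"
  proof
    fix z assume "z \<in> basis (Suc n)"
    then have "z(n := False) \<in> basis n" by (auto simp: basis_def)
    moreover have "z = (\<lambda>(z, b). z(n := b)) (z(n := False), z n)" by simp
    ultimately show "z \<in> (\<lambda>(z, b). z(n := b)) ` (basis n \<times> UNIV)" by blast
  qed
qed (auto simp: basis_def)

lemma inj_on_fun_upd_basis: "inj_on (\<lambda>(z, b). z(n := b)) (basis n \<times> UNIV)"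
proof (rule inj_onI, clarify)
  fix z b z' b'
  assume zb: "z \<in> basis n" "z' \<in> basis n" and eq: "z(n := b) = z'(n := b')"
  have "z j = z' j" for j
  proof (cases "j = n")
    case True
    with zb show ?thesis by (simp add: basis_def)
  next
    case False
    with fun_cong[OF eq, of j] show ?thesis by simp
  qed
  then have "z = z'" ..
  with eq show "z = z' \<and> b = b'"
    by (metis fun_upd_same)
qed

lemma finite_basis [simp]: "finite (basis n)"
  by (induction n) (simp_all add: basis_0 basis_Suc)

lemma sum_basis_prod:
  fixes f :: "nat \<Rightarrow> bool \<Rightarrow> 'a::comm_semiring_1"
  shows "(\<Sum>z\<in>basis n. \<Prod>j<n. f j (z j)) = (\<Prod>j<n. f j False + f j True)"
proof (induction n)
  case 0
  show ?case by (simp add: basis_0)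
next
  case (Suc n)
  have "(\<Sum>z\<in>basis (Suc n). \<Prod>j<Suc n. f j (z j))
      = (\<Sum>(z, b)\<in>basis n \<times> UNIV. \<Prod>j<Suc n. f j ((z(n := b)) j))"
    unfolding basis_Suc
    by (subst sum.reindex[OF inj_on_fun_upd_basis]) (simp add: case_prod_unfold)
  also have "\<dots> = (\<Sum>z\<in>basis n. \<Sum>b\<in>UNIV. (\<Prod>j<n. f j (z j)) * f n b)"
    by (subst sum.cartesian_product[symmetric]) (simp add: lessThan_Suc mult.commute)
  also have "\<dots> = (\<Sum>z\<in>basis n. \<Prod>j<n. f j (z j)) * (f n False + f n True)"
    by (simp add: UNIV_bool distrib_left sum_distrib_right sum.distrib)
  finally show ?case
    using Suc by (simp add: lessThan_Suc mult.commute)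
qed

definition pauli_string_prod :: "(nat \<Rightarrow> pauli) \<Rightarrow> (nat \<Rightarrow> pauli) \<Rightarrow> nat \<Rightarrow> pauli" where
  "pauli_string_prod p q = (\<lambda>j. pauli_prod (p j) (q j))"

definition pauli_string_phase :: "nat \<Rightarrow> (nat \<Rightarrow> pauli) \<Rightarrow> (nat \<Rightarrow> pauli) \<Rightarrow> complex" where
  "pauli_string_phase n p q = (\<Prod>j<n. pauli_phase (p j) (q j))"

lemma pauli_op_mult:
  "op_mult n (pauli_op n p) (pauli_op n q)
     = (\<lambda>x y. pauli_string_phase n p q * pauli_op n (pauli_string_prod p q) x y)"
proof (intro ext)
  fix x y
  have "op_mult n (pauli_op n p) (pauli_op n q) x y
      = (\<Sum>z\<in>basis n. \<Prod>j<n. pmat (p j) (x j) (z j) * pmat (q j) (z j) (y j))"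
    unfolding op_mult_def pauli_op_def by (simp only: prod.distrib)
  also have "\<dots> = (\<Prod>j<n. pauli_phase (p j) (q j) * pmat (pauli_prod (p j) (q j)) (x j) (y j))"
    by (subst sum_basis_prod) (simp only: pmat_mult)
  finally show "op_mult n (pauli_op n p) (pauli_op n q) x y
      = pauli_string_phase n p q * pauli_op n (pauli_string_prod p q) x y"
    unfolding pauli_string_phase_def pauli_string_prod_def pauli_op_def by (simp only: prod.distrib)
qed

lemma pauli_op_cong: "(\<And>j. j < n \<Longrightarrow> p j = q j) \<Longrightarrow> pauli_op n p = pauli_op n q"
  unfolding pauli_op_def by (intro ext prod.cong) auto

lemma pauli_op_trivial:
  assumes "\<forall>j<n. p j = PI" and "x \<in> basis n" "y \<in> basis n"
  shows "pauli_op n p x y = op_id x y"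
proof -
  have "(\<forall>j<n. x j = y j) \<longleftrightarrow> x = y"
    using assms(2,3) by (auto simp: basis_def fun_eq_iff) (metis not_less)+
  then show ?thesis
    using assms(1) by (auto simp: pauli_op_def op_id_def prod_zero_iff)
qed

section \<open>Qubit permutations and symmetrization\<close>

lemma perm_conj_pauli_op:
  assumes "\<sigma> permutes {..<n}"
  shows "perm_conj \<sigma> (pauli_op n p) = pauli_op n (p \<circ> inv \<sigma>)"
proof (intro ext)
  fix x y
  let ?f = "\<lambda>j. pmat (p (inv \<sigma> j)) (x j) (y j)"
  have "pauli_op n (p \<circ> inv \<sigma>) x y = prod (?f \<circ> \<sigma>) {..<n}"
    unfolding pauli_op_def using prod.permute[OF assms] by simp
  then show "perm_conj \<sigma> (pauli_op n p) x y = pauli_op n (p \<circ> inv \<sigma>) x y"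
    unfolding perm_conj_def pauli_op_def by (simp add: permutes_inverses[OF assms])
qed

lemma comp_permutes_in_basis:
  assumes "\<sigma> permutes {..<n}" "z \<in> basis n"
  shows "z \<circ> \<sigma> \<in> basis n"
  using assms unfolding basis_def by (auto simp: permutes_not_in)

lemma bij_betw_comp_permutes_basis:
  assumes "\<sigma> permutes {..<n}"
  shows "bij_betw (\<lambda>z. z \<circ> \<sigma>) (basis n) (basis n)"
proof (rule bij_betw_byWitness[where f' = "\<lambda>z. z \<circ> inv \<sigma>"])
  show "\<forall>z\<in>basis n. z \<circ> \<sigma> \<circ> inv \<sigma> = z" "\<forall>z\<in>basis n. z \<circ> inv \<sigma> \<circ> \<sigma> = z"
    by (simp_all add: o_assoc[symmetric] permutes_inv_o[OF assms])
  show "(\<lambda>z. z \<circ> \<sigma>) ` basis n \<subseteq> basis n" "(\<lambda>z. z \<circ> inv \<sigma>) ` basis n \<subseteq> basis n"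
    using comp_permutes_in_basis assms permutes_inv[OF assms] by auto
qed

lemma perm_conj_op_mult:
  assumes "\<sigma> permutes {..<n}"
  shows "perm_conj \<sigma> (op_mult n A B) = op_mult n (perm_conj \<sigma> A) (perm_conj \<sigma> B)"
proof (intro ext)
  fix x y
  show "perm_conj \<sigma> (op_mult n A B) x y = op_mult n (perm_conj \<sigma> A) (perm_conj \<sigma> B) x y"
    unfolding perm_conj_def op_mult_def
    using sum.reindex_bij_betw[OF bij_betw_comp_permutes_basis[OF assms],
        of "\<lambda>z. A (x \<circ> \<sigma>) z * B z (y \<circ> \<sigma>)"]
    by simp
qed

lemma perm_conj_perm_conj: "perm_conj \<sigma> (perm_conj \<tau> A) = perm_conj (\<sigma> \<circ> \<tau>) A"
  unfolding perm_conj_def by (simp add: o_assoc)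

lemma perm_conj_Sym:
  assumes "\<tau> permutes {..<n}"
  shows "perm_conj \<tau> (Sym n A) = Sym n A"
  unfolding Sym_def perm_conj_def
  using setum_permutations_compose_left[OF assms, of "\<lambda>\<sigma>. perm_conj \<sigma> A _ _"]
  by (simp add: perm_conj_def o_assoc)

lemma Sym_perm_conj:
  assumes "\<tau> permutes {..<n}"
  shows "Sym n (perm_conj \<tau> A) = Sym n A"
  unfolding Sym_def perm_conj_perm_conj
  using sum_permutations_compose_right[OF assms, of "\<lambda>\<sigma>. perm_conj \<sigma> A _ _"] by simp

lemma Sym_pauli_op_comp:
  assumes "\<pi> permutes {..<n}"
  shows "Sym n (pauli_op n (p \<circ> \<pi>)) = Sym n (pauli_op n p)"
proof -
  have "pauli_op n (p \<circ> \<pi>) = perm_conj (inv \<pi>) (pauli_op n p)"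
    using perm_conj_pauli_op[OF permutes_inv[OF assms]] permutes_inv_inv[OF assms] by simp
  then show ?thesis
    using Sym_perm_conj[OF permutes_inv[OF assms]] by simp
qed

lemma Sym_invariant:
  assumes "\<And>\<sigma>. \<sigma> permutes {..<n} \<Longrightarrow> perm_conj \<sigma> A = A"
  shows "Sym n A = A"
proof (intro ext)
  fix x y
  have "Sym n A x y = of_nat (card {\<sigma>. \<sigma> permutes {..<n}}) * A x y / of_nat (fact n)"
    unfolding Sym_def using assms by simp
  then show "Sym n A x y = A x y"
    by (simp add: card_permutations)
qed

lemma op_mult_Sym_left:
  assumes "\<And>\<sigma>. \<sigma> permutes {..<n} \<Longrightarrow> perm_conj \<sigma> B = B"
  shows "op_mult n (Sym n A) B = Sym n (op_mult n A B)"
proof (intro ext)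
  fix x y
  let ?P = "{\<sigma>. \<sigma> permutes {..<n}}"
  have "Sym n (op_mult n A B) x y
      = (\<Sum>\<sigma>\<in>?P. op_mult n (perm_conj \<sigma> A) B x y) / of_nat (fact n)"
    unfolding Sym_def by (simp add: perm_conj_op_mult assms)
  also have "\<dots> = (\<Sum>z\<in>basis n. \<Sum>\<sigma>\<in>?P. perm_conj \<sigma> A x z * B z y) / of_nat (fact n)"
    unfolding op_mult_def by (subst sum.swap) simp
  also have "\<dots> = op_mult n (Sym n A) B x y"
    unfolding op_mult_def Sym_def
    by (simp add: sum_distrib_left sum_distrib_right sum_divide_distrib)
  finally show "op_mult n (Sym n A) B x y = Sym n (op_mult n A B) x y" ..
qed

lemma Sym_sum:
  "Sym n (\<lambda>x y. \<Sum>i\<in>I. c i * A i x y) = (\<lambda>x y. \<Sum>i\<in>I. c i * Sym n (A i) x y)"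
  unfolding Sym_def perm_conj_def
  by (intro ext) (simp add: sum_distrib_left mult_ac sum.swap[of _ I])

lemma op_mult_pauli_op_Sym:
  "op_mult n (pauli_op n p) (Sym n (pauli_op n q))
     = (\<lambda>x y. \<Sum>\<sigma> | \<sigma> permutes {..<n}.
          pauli_string_phase n p (q \<circ> inv \<sigma>) / of_nat (fact n)
            * pauli_op n (pauli_string_prod p (q \<circ> inv \<sigma>)) x y)"
proof (intro ext)
  fix x y
  let ?P = "{\<sigma>. \<sigma> permutes {..<n}}"
  have "op_mult n (pauli_op n p) (Sym n (pauli_op n q)) x y
      = (\<Sum>\<sigma>\<in>?P. op_mult n (pauli_op n p) (perm_conj \<sigma> (pauli_op n q)) x y) / of_nat (fact n)"
    unfolding op_mult_def Sym_def
    by (subst sum.swap) (simp add: sum_distrib_left sum_divide_distrib mult_ac)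
  also have "\<dots> = (\<Sum>\<sigma>\<in>?P. op_mult n (pauli_op n p) (pauli_op n (q \<circ> inv \<sigma>)) x y) / of_nat (fact n)"
    by (simp add: perm_conj_pauli_op)
  finally show "op_mult n (pauli_op n p) (Sym n (pauli_op n q)) x y
      = (\<Sum>\<sigma>\<in>?P. pauli_string_phase n p (q \<circ> inv \<sigma>) / of_nat (fact n)
            * pauli_op n (pauli_string_prod p (q \<circ> inv \<sigma>)) x y)"
    unfolding pauli_op_mult by (simp add: sum_divide_distrib)
qed

lemma Sym_mult_Sym_pauli_op:
  "op_mult n (Sym n (pauli_op n p)) (Sym n (pauli_op n q))
     = (\<lambda>x y. \<Sum>\<sigma> | \<sigma> permutes {..<n}.
          pauli_string_phase n p (q \<circ> inv \<sigma>) / of_nat (fact n)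
            * Sym n (pauli_op n (pauli_string_prod p (q \<circ> inv \<sigma>))) x y)"
  by (simp only: op_mult_Sym_left[OF perm_conj_Sym] op_mult_pauli_op_Sym Sym_sum)

lemma Sym_pauli_op_weight_zero:
  assumes "wt n p = 0" "x \<in> basis n" "y \<in> basis n"
  shows "Sym n (pauli_op n p) x y = op_id x y"
proof -
  have trivial: "\<forall>j<n. p j = PI"
    using assms(1) by (auto simp: wt_def supp_def)
  have "perm_conj \<sigma> (pauli_op n p) = pauli_op n p" if "\<sigma> permutes {..<n}" for \<sigma>
    unfolding perm_conj_pauli_op[OF that]
    using trivial permutes_in_image[OF permutes_inv[OF that]] by (intro pauli_op_cong) simp
  then have "Sym n (pauli_op n p) = pauli_op n p"
    by (rule Sym_invariant)
  then show ?thesis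
    using pauli_op_trivial[OF trivial assms(2,3)] by simp
qed

section \<open>Weights of products with a single-qubit factor\<close>

lemma pauli_string_comp_permutes:
  "pauli_string n p \<Longrightarrow> \<pi> permutes {..<n} \<Longrightarrow> pauli_string n (p \<circ> \<pi>)"
  unfolding pauli_string_def by (simp add: permutes_not_in)

lemma pauli_string_pauli_string_prod:
  "pauli_string n p \<Longrightarrow> pauli_string n q \<Longrightarrow> pauli_string n (pauli_string_prod p q)"
  unfolding pauli_string_def pauli_string_prod_def by simp

lemma pauli_string_single: "i < n \<Longrightarrow> pauli_string n (single p i)"
  unfolding pauli_string_def single_def by auto

lemma pauli_string_fun_upd_PI: "pauli_string n p \<Longrightarrow> pauli_string n (p(i := PI))"
  unfolding pauli_string_def by simp

lemma supp_fun_upd_PI: "supp n (p(i := PI)) = supp n p - {i}"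
  unfolding supp_def by auto

lemma finite_supp [simp]: "finite (supp n p)"
  unfolding supp_def by simp

lemma wt_comp_permutes:
  assumes "\<pi> permutes {..<n}"
  shows "wt n (p \<circ> \<pi>) = wt n p"
proof -
  have "supp n (p \<circ> \<pi>) = \<pi> -` supp n p"
    using permutes_in_image[OF assms] by (auto simp: supp_def)
  then have "\<pi> ` supp n (p \<circ> \<pi>) = supp n p"
    by (simp add: surj_image_vimage_eq permutes_surj[OF assms])
  then show ?thesis
    unfolding wt_def by (metis card_image inj_on_subset permutes_inj[OF assms] subset_UNIV)
qed

lemma pauli_string_prod_single:
  "q i = PI \<Longrightarrow> pauli_string_prod (single p i) q = q(i := p i)"
  unfolding pauli_string_prod_def single_def by auto

lemma pauli_string_phase_single:
  "q i = PI \<Longrightarrow> pauli_string_phase n (single p i) q = 1"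
  unfolding pauli_string_phase_def single_def by (intro prod.neutral) auto

lemma wt_pauli_string_prod_single_le: "wt n (pauli_string_prod (single p i) q) \<le> Suc (wt n q)"
proof -
  have "supp n (pauli_string_prod (single p i) q) \<subseteq> insert i (supp n q)"
    unfolding supp_def pauli_string_prod_def single_def by auto
  then have "wt n (pauli_string_prod (single p i) q) \<le> card (insert i (supp n q))"
    unfolding wt_def by (intro card_mono) auto
  also have "\<dots> \<le> Suc (wt n q)"
    unfolding wt_def by (rule card_insert_le_m1) auto
  finally show ?thesis .
qed

lemma wt_pauli_string_prod_single_occupied:
  assumes "q i \<noteq> PI"
  shows "wt n (pauli_string_prod (single p i) q) \<le> wt n q"
proof -
  have "supp n (pauli_string_prod (single p i) q) \<subseteq> supp n q"
    using assms unfolding supp_def pauli_string_prod_def single_def by auto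
  then show ?thesis
    unfolding wt_def by (intro card_mono) auto
qed

lemma fun_upd_eq_comp_transpose:
  assumes "f i = f k"
  shows "f(i := a) = f(k := a) \<circ> transpose i k"
proof
  fix j
  show "(f(i := a)) j = (f(k := a) \<circ> transpose i k) j"
    using assms by (cases "j = i"; cases "j = k") auto
qed

lemma Sym_pauli_string_prod_single_fun_upd_PI:
  assumes i: "i < n" and \<sigma>: "\<sigma> permutes {..<n}" and free: "(p(i := PI)) (inv \<sigma> i) = PI"
  shows "Sym n (pauli_op n (pauli_string_prod (single p i) (p(i := PI) \<circ> inv \<sigma>)))
       = Sym n (pauli_op n p)"
proof -
  let ?q = "p(i := PI) \<circ> inv \<sigma>"
  have "pauli_string_prod (single p i) ?q = ?q(i := p i)"
    using free by (intro pauli_string_prod_single) simp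
  also have "\<dots> = ?q(\<sigma> i := p i) \<circ> transpose i (\<sigma> i)"
    using free permutes_inverses(2)[OF \<sigma>] by (intro fun_upd_eq_comp_transpose) simp
  also have "?q(\<sigma> i := p i) = p \<circ> inv \<sigma>"
  proof
    fix j
    have "inv \<sigma> j = i \<longleftrightarrow> j = \<sigma> i"
      using permutes_inverses[OF \<sigma>] by metis
    then show "(?q(\<sigma> i := p i)) j = (p \<circ> inv \<sigma>) j"
      using permutes_inverses(2)[OF \<sigma>] by auto
  qed
  finally have "pauli_string_prod (single p i) ?q = p \<circ> (inv \<sigma> \<circ> transpose i (\<sigma> i))"
    by (simp only: o_assoc)
  moreover have "inv \<sigma> \<circ> transpose i (\<sigma> i) permutes {..<n}"
    using i permutes_in_image[OF \<sigma>, of i]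
    by (intro permutes_compose permutes_swap_id permutes_inv[OF \<sigma>]) auto
  ultimately show ?thesis
    by (simp add: Sym_pauli_op_comp)
qed

section \<open>Spherical errors modulo lower-weight symmetrized errors\<close>

lemma op_mult_vanishing_right:
  "\<forall>x\<in>basis n. \<forall>y\<in>basis n. A x y = 0 \<Longrightarrow> \<forall>x\<in>basis n. \<forall>y\<in>basis n. op_mult n B A x y = 0"
  unfolding op_mult_def by simp

lemma op_mult_add_right:
  "op_mult n A (\<lambda>x y. B x y + D x y) = (\<lambda>x y. op_mult n A B x y + op_mult n A D x y)"
  unfolding op_mult_def by (simp add: distrib_left sum.distrib)

lemma op_mult_scale_right: "op_mult n A (\<lambda>x y. c * B x y) = (\<lambda>x y. c * op_mult n A B x y)"
  unfolding op_mult_def by (simp add: sum_distrib_left mult_ac)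

text \<open>Operators are only evaluated on basis states, so those vanishing there count as zero.\<close>

inductive_set sym_span :: "nat \<Rightarrow> nat \<Rightarrow> qop set" for n k where
  Sym_pauli_op: "pauli_string n p \<Longrightarrow> wt n p < k \<Longrightarrow> Sym n (pauli_op n p) \<in> sym_span n k"
| vanishing: "\<forall>x\<in>basis n. \<forall>y\<in>basis n. A x y = 0 \<Longrightarrow> A \<in> sym_span n k"
| add: "A \<in> sym_span n k \<Longrightarrow> B \<in> sym_span n k \<Longrightarrow> (\<lambda>x y. A x y + B x y) \<in> sym_span n k"
| scale: "A \<in> sym_span n k \<Longrightarrow> (\<lambda>x y. c * A x y) \<in> sym_span n k"

lemma sym_span_sum:
  assumes "finite I" "\<And>i. i \<in> I \<Longrightarrow> A i \<in> sym_span n k"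
  shows "(\<lambda>x y. \<Sum>i\<in>I. c i * A i x y) \<in> sym_span n k"
  using assms
proof (induction I rule: finite_induct)
  case empty
  then show ?case by (simp add: sym_span.vanishing)
next
  case (insert i I)
  then show ?case
    using sym_span.add[OF sym_span.scale[of "A i" n k "c i"]] by simp
qed

lemma pauli_string_prod_single_comp_permutes:
  "i < n \<Longrightarrow> pauli_string n q \<Longrightarrow> \<pi> permutes {..<n}
    \<Longrightarrow> pauli_string n (pauli_string_prod (single p i) (q \<circ> \<pi>))"
  by (intro pauli_string_pauli_string_prod pauli_string_single pauli_string_comp_permutes)

lemma occupied_Sym_pauli_string_prod_single_in_sym_span:
  assumes "i < n" "pauli_string n q" "\<sigma> permutes {..<n}" "(q \<circ> inv \<sigma>) i \<noteq> PI"
  shows "Sym n (pauli_op n (pauli_string_prod (single p i) (q \<circ> inv \<sigma>))) \<in> sym_span n (Suc (wt n q))"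
proof (rule sym_span.Sym_pauli_op)
  show "pauli_string n (pauli_string_prod (single p i) (q \<circ> inv \<sigma>))"
    using assms(1,2) permutes_inv[OF assms(3)] by (rule pauli_string_prod_single_comp_permutes)
  show "wt n (pauli_string_prod (single p i) (q \<circ> inv \<sigma>)) < Suc (wt n q)"
    using wt_pauli_string_prod_single_occupied[of "q \<circ> inv \<sigma>" i n p] assms(4)
      wt_comp_permutes[OF permutes_inv[OF assms(3)]] by simp
qed

lemma Sym_single_mult_sym_span:
  assumes "i < n" "A \<in> sym_span n k"
  shows "op_mult n (Sym n (pauli_op n (single p i))) A \<in> sym_span n (Suc k)"
  using assms(2)
proof (induction rule: sym_span.induct)
  case (Sym_pauli_op q)
  have "Sym n (pauli_op n (pauli_string_prod (single p i) (q \<circ> inv \<sigma>))) \<in> sym_span n (Suc k)"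
    if "\<sigma> permutes {..<n}" for \<sigma>
  proof (rule sym_span.Sym_pauli_op)
    show "pauli_string n (pauli_string_prod (single p i) (q \<circ> inv \<sigma>))"
      using assms(1) Sym_pauli_op(1) permutes_inv[OF that]
      by (rule pauli_string_prod_single_comp_permutes)
    show "wt n (pauli_string_prod (single p i) (q \<circ> inv \<sigma>)) < Suc k"
      using wt_pauli_string_prod_single_le[of n p i "q \<circ> inv \<sigma>"] Sym_pauli_op(2)
        wt_comp_permutes[OF permutes_inv[OF that]] by simp
  qed
  then show ?case
    unfolding Sym_mult_Sym_pauli_op by (intro sym_span_sum) (simp_all add: finite_permutations)
qed (simp_all add: op_mult_vanishing_right op_mult_add_right op_mult_scale_right sym_span.intros)

lemma Sym_single_mult_Sym_fun_upd_PI: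
  assumes i: "i < n" and p: "pauli_string n p"
  obtains \<alpha> where "\<alpha> \<noteq> 0"
    and "(\<lambda>x y. op_mult n (Sym n (pauli_op n (single p i))) (Sym n (pauli_op n (p(i := PI)))) x y
                - \<alpha> * Sym n (pauli_op n p) x y) \<in> sym_span n (Suc (wt n (p(i := PI))))"
proof -
  define q where "q = p(i := PI)"
  define P where "P = {\<sigma>. \<sigma> permutes {..<n}}"
  define S where "S = {\<sigma>\<in>P. q (inv \<sigma> i) = PI}"
  define coeff where "coeff \<sigma> = pauli_string_phase n (single p i) (q \<circ> inv \<sigma>) / of_nat (fact n)" for \<sigma>
  define T where "T \<sigma> = Sym n (pauli_op n (pauli_string_prod (single p i) (q \<circ> inv \<sigma>)))" for \<sigma>
  define \<alpha> :: complex where "\<alpha> = of_nat (card S) / of_nat (fact n)"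
  have finite_P: "finite P"
    unfolding P_def by (rule finite_permutations) simp
  have "id \<in> S"
    unfolding S_def P_def q_def by simp
  then have "\<alpha> \<noteq> 0"
    using finite_P unfolding \<alpha>_def S_def by (auto simp: card_eq_0_iff)
  have S_terms: "coeff \<sigma> * T \<sigma> x y = Sym n (pauli_op n p) x y / of_nat (fact n)" if "\<sigma> \<in> S" for \<sigma> x y
    using that i Sym_pauli_string_prod_single_fun_upd_PI[of i n \<sigma> p]
    unfolding S_def P_def coeff_def T_def q_def by (simp add: pauli_string_phase_single)
  have "op_mult n (Sym n (pauli_op n (single p i))) (Sym n (pauli_op n q)) x y - \<alpha> * Sym n (pauli_op n p) x y
      = (\<Sum>\<sigma>\<in>P - S. coeff \<sigma> * T \<sigma> x y)" for x y
  proof -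
    have "op_mult n (Sym n (pauli_op n (single p i))) (Sym n (pauli_op n q)) x y
        = (\<Sum>\<sigma>\<in>P. coeff \<sigma> * T \<sigma> x y)"
      unfolding Sym_mult_Sym_pauli_op coeff_def T_def P_def by simp
    also have "\<dots> = (\<Sum>\<sigma>\<in>S. coeff \<sigma> * T \<sigma> x y) + (\<Sum>\<sigma>\<in>P - S. coeff \<sigma> * T \<sigma> x y)"
      using sum.subset_diff[of S P "\<lambda>\<sigma>. coeff \<sigma> * T \<sigma> x y"] finite_P
      by (simp add: S_def add.commute)
    moreover have "(\<Sum>\<sigma>\<in>S. coeff \<sigma> * T \<sigma> x y) = \<alpha> * Sym n (pauli_op n p) x y"
      using S_terms unfolding \<alpha>_def by simp
    ultimately show ?thesis
      by simp
  qed
  moreover have "(\<lambda>x y. \<Sum>\<sigma>\<in>P - S. coeff \<sigma> * T \<sigma> x y) \<in> sym_span n (Suc (wt n q))"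
  proof (rule sym_span_sum)
    fix \<sigma> assume "\<sigma> \<in> P - S"
    then show "T \<sigma> \<in> sym_span n (Suc (wt n q))"
      using i pauli_string_fun_upd_PI[OF p] unfolding P_def S_def T_def q_def
      by (auto intro: occupied_Sym_pauli_string_prod_single_in_sym_span)
  qed (use finite_P in simp)
  ultimately show ?thesis
    using \<open>\<alpha> \<noteq> 0\<close> that unfolding q_def by simp
qed

lemma Sph_Min_supp:
  assumes "supp n p \<noteq> {}"
  defines "i \<equiv> Min (supp n p)"
  shows "Sph n p = op_mult n (Sym n (pauli_op n (single p i))) (Sph n (p(i := PI)))"
proof -
  let ?factor = "\<lambda>q j A. op_mult n (Sym n (pauli_op n (single q j))) A"
  have "sorted_list_of_set (supp n p) = i # sorted_list_of_set (supp n p - {i})"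
    unfolding i_def using assms(1) by (simp add: sorted_list_of_set_nonempty)
  moreover have "single (p(i := PI)) j = single p j" if "j \<noteq> i" for j
    using that by (auto simp: single_def)
  then have "foldr (?factor p) (sorted_list_of_set (supp n p - {i})) op_id
      = foldr (?factor (p(i := PI))) (sorted_list_of_set (supp n p - {i})) op_id"
    by (intro foldr_cong) auto
  ultimately show ?thesis
    unfolding Sph_def supp_fun_upd_PI by simp
qed

lemma Sph_weight_zero: "wt n p = 0 \<Longrightarrow> Sph n p = op_id"
  unfolding Sph_def wt_def by simp

lemma Sph_eq_Sym_mod_sym_span:
  assumes "pauli_string n p"
  shows "\<exists>c. c \<noteq> 0 \<and> (\<lambda>x y. Sph n p x y - c * Sym n (pauli_op n p) x y) \<in> sym_span n (wt n p)"
  using assms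
proof (induction "wt n p" arbitrary: p)
  case 0
  then have "wt n p = 0"
    by simp
  then have "\<forall>x\<in>basis n. \<forall>y\<in>basis n. Sph n p x y - 1 * Sym n (pauli_op n p) x y = 0"
    by (simp add: Sph_weight_zero Sym_pauli_op_weight_zero)
  then have "(\<lambda>x y. Sph n p x y - 1 * Sym n (pauli_op n p) x y) \<in> sym_span n (wt n p)"
    by (rule sym_span.vanishing)
  then show ?case
    by (intro exI[of _ 1]) simp
next
  case (Suc w)
  then have wt_p: "wt n p = Suc w"
    by simp
  define i where "i = Min (supp n p)"
  define q where "q = p(i := PI)"
  define A where "A = Sym n (pauli_op n (single p i))"
  have "supp n p \<noteq> {}"
    using wt_p by (auto simp: wt_def)
  then have Sph_p: "Sph n p = op_mult n A (Sph n q)" and "i \<in> supp n p"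
    unfolding A_def q_def i_def by (simp_all add: Sph_Min_supp)
  then have "i < n"
    by (simp add: supp_def)
  have wt_q: "wt n q = w"
    using wt_p \<open>i \<in> supp n p\<close> unfolding wt_def q_def supp_fun_upd_PI by simp
  obtain c where "c \<noteq> 0"
    and "(\<lambda>x y. Sph n q x y - c * Sym n (pauli_op n q) x y) \<in> sym_span n w"
    using Suc(1)[of q] wt_q pauli_string_fun_upd_PI[OF Suc(3)] unfolding q_def by auto
  moreover define R where "R = (\<lambda>x y. Sph n q x y - c * Sym n (pauli_op n q) x y)"
  ultimately have AR: "op_mult n A R \<in> sym_span n (Suc w)"
    unfolding A_def using Sym_single_mult_sym_span[OF \<open>i < n\<close>] by blast
  obtain \<alpha> where "\<alpha> \<noteq> 0"
    and "(\<lambda>x y. op_mult n A (Sym n (pauli_op n q)) x y - \<alpha> * Sym n (pauli_op n p) x y)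
          \<in> sym_span n (Suc w)"
    using Sym_single_mult_Sym_fun_upd_PI[OF \<open>i < n\<close> Suc(3)]
    unfolding A_def q_def[symmetric] wt_q .
  moreover define D
    where "D = (\<lambda>x y. op_mult n A (Sym n (pauli_op n q)) x y - \<alpha> * Sym n (pauli_op n p) x y)"
  ultimately have "(\<lambda>x y. op_mult n A R x y + c * D x y) \<in> sym_span n (Suc w)"
    using sym_span.add[OF AR sym_span.scale] by blast
  moreover have "(\<lambda>x y. op_mult n A R x y + c * D x y)
      = (\<lambda>x y. Sph n p x y - (c * \<alpha>) * Sym n (pauli_op n p) x y)"
    unfolding R_def D_def Sph_p op_mult_def
    by (simp add: algebra_simps sum_subtractf sum_distrib_left)
  ultimately have "(\<lambda>x y. Sph n p x y - (c * \<alpha>) * Sym n (pauli_op n p) x y) \<in> sym_span n (wt n p)"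
    using wt_p by simp
  then show ?case
    using \<open>c \<noteq> 0\<close> \<open>\<alpha> \<noteq> 0\<close> by (intro exI[of _ "c * \<alpha>"]) simp
qed

section \<open>Knill-Laflamme conditions\<close>

lemma braket_add: "braket n \<phi> (\<lambda>x y. A x y + B x y) \<psi> = braket n \<phi> A \<psi> + braket n \<phi> B \<psi>"
  unfolding braket_def by (simp add: distrib_left distrib_right sum.distrib)

lemma braket_scale: "braket n \<phi> (\<lambda>x y. c * A x y) \<psi> = c * braket n \<phi> A \<psi>"
  unfolding braket_def by (simp add: sum_distrib_left mult_ac)

lemma braket_diff:
  "braket n \<phi> (\<lambda>x y. A x y - B x y) \<psi> = braket n \<phi> A \<psi> - braket n \<phi> B \<psi>"
  unfolding braket_def by (simp add: algebra_simps sum_subtractf)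

lemma braket_vanishing:
  "\<forall>x\<in>basis n. \<forall>y\<in>basis n. A x y = 0 \<Longrightarrow> braket n \<phi> A \<psi> = 0"
  unfolding braket_def by simp

lemma KL_sym_span:
  assumes "\<forall>p. pauli_string n p \<and> wt n p < k \<longrightarrow> KL n C (Sym n (pauli_op n p))"
    and "A \<in> sym_span n k"
  shows "KL n C A"
  using assms(2)
proof (induction rule: sym_span.induct)
  case (vanishing A)
  then show ?case
    unfolding KL_def by (auto simp: braket_vanishing)
next
  case (add A B)
  then show ?case
    unfolding KL_def braket_add by (metis distrib_right)
next
  case (scale A c)
  then show ?case
    unfolding KL_def braket_scale by (metis mult.assoc)
qed (use assms(1) in blast)

lemma KL_cancel:
  assumes "KL n C A" "KL n C (\<lambda>x y. A x y - c * B x y)" "c \<noteq> 0"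
  shows "KL n C B"
proof -
  obtain a b where "\<forall>\<phi>\<in>C. \<forall>\<psi>\<in>C. braket n \<phi> A \<psi> = a * inner n \<phi> \<psi>"
    and "\<forall>\<phi>\<in>C. \<forall>\<psi>\<in>C. braket n \<phi> A \<psi> - c * braket n \<phi> B \<psi> = b * inner n \<phi> \<psi>"
    using assms(1,2) unfolding KL_def braket_diff braket_scale by blast
  then have "\<forall>\<phi>\<in>C. \<forall>\<psi>\<in>C. braket n \<phi> B \<psi> = (a - b) / c * inner n \<phi> \<psi>"
    using assms(3) by (simp add: field_simps)
  then show ?thesis
    unfolding KL_def by blast
qed

theorem lemmaS8:
  fixes n d :: nat and C :: "qvec set"
  assumes "is_code n C"
    and "\<forall>p. pauli_string n p \<and> wt n p < d \<longrightarrow> KL n C (Sph n p)"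
  shows "\<forall>p. pauli_string n p \<and> wt n p < d \<longrightarrow> KL n C (Sym n (pauli_op n p))"
  using assms(2)
proof (induction d)
  case (Suc d)
  then have KL_Sym_below: "\<forall>p. pauli_string n p \<and> wt n p < d \<longrightarrow> KL n C (Sym n (pauli_op n p))"
    by simp
  show ?case
  proof (intro allI impI, elim conjE)
    fix p assume p: "pauli_string n p" and "wt n p < Suc d"
    obtain c where "c \<noteq> 0"
      and remainder: "(\<lambda>x y. Sph n p x y - c * Sym n (pauli_op n p) x y) \<in> sym_span n (wt n p)"
      using Sph_eq_Sym_mod_sym_span[OF p] by blast
    have "\<forall>q. pauli_string n q \<and> wt n q < wt n p \<longrightarrow> KL n C (Sym n (pauli_op n q))"
      using KL_Sym_below \<open>wt n p < Suc d\<close> by simp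
    then have KL_remainder: "KL n C (\<lambda>x y. Sph n p x y - c * Sym n (pauli_op n p) x y)"
      using remainder by (rule KL_sym_span)
    have "KL n C (Sph n p)"
      using Suc.prems p \<open>wt n p < Suc d\<close> by simp
    then show "KL n C (Sym n (pauli_op n p))"
      using KL_remainder \<open>c \<noteq> 0\<close> by (rule KL_cancel)
  qed
qed simp

end
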